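(* Let $\langle W,\mathcal{N},V\rangle$ be an nIML1-model satisfying the $T$-condition: for all $w,v\in W$, $v\in\bigcup\mathcal{N}_w$ implies $\bigcap\mathcal{N}_v\subseteq\bigcup\mathcal{N}_w$. Then for every $w\in W$ and all formulas $\varphi,\psi$: $w\Vdash\varphi\rightsquigarrow\psi$ iff $w\Vdash\Delta(\varphi\rightarrow\psi)$.
   Context: Formulas are built from a denumerable set $PV$ of propositional variables and $\bot$ using binary $\land,\lor,\rightarrow,\rightsquigarrow$ and unary $\Delta$. An nIML1-model is a triple $\langle W,\mathcal{N},V\rangle$ with $W\neq\emptyset$, $\mathcal{N}:W\to P(P(W))$ satisfying for all $w$: (a) $w\in\bigcap\mathcal{N}_w$; (b) $\bigcap\mathcal{N}_w\in\mathcal{N}_w$; (c) $u\in\bigcap\mathcal{N}_w\Rightarrow\bigcap\mathcal{N}_u\subseteq\bigcap\mathcal{N}_w$; (d) $\bigcap\mathcal{N}_w\subseteq X\subseteq\bigcup\mathcal{N}_w\Rightarrow X\in\mathcal{N}_w$; (e) $u\in\bigcap\mathcal{N}_w\Rightarrow\bigcup\mathcal{N}_u\subseteq\bigcup\mathcal{N}_w$ ($\bigcap\mathcal{N}_w$, $\bigcup\mathcal{N}_w$ the intersection and union of the family $\mathcal{N}_w$), and $V:PV\to P(W)$ with $w\in V(q)\Rightarrow\bigcap\mathcal{N}_w\subseteq V(q)$. Forcing: atoms via $V$; $\bot$ never; $\land,\lor$ pointwise; $w\Vdash\varphi\rightarrow\psi$ iff every $v\in\bigcap\mathcal{N}_w$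 has $v\nVdash\varphi$ or $v\Vdash\psi$; $w\Vdash\varphi\rightsquigarrow\psi$ iff every $v\in\bigcup\mathcal{N}_w$ has $v\nVdash\varphi$ or $v\Vdash\psi$; $w\Vdash\Delta\varphi$ iff every $v\in\bigcup\mathcal{N}_w$ has $v\Vdash\varphi$. *)

theory Defs
  imports Main
begin

datatype form =
    Var nat
  | Bot
  | Conj form form
  | Disj form form
  | Imp form form
  | SImp form form
  | Delta form

definition capN :: "('w \<Rightarrow> 'w set set) \<Rightarrow> 'w \<Rightarrow> 'w set" where
  "capN N w = \<Inter> (N w)"

definition cupN :: "('w \<Rightarrow> 'w set set) \<Rightarrow> 'w \<Rightarrow> 'w set" where
  "cupN N w = \<Union> (N w)"

definition nIML1_model :: "'w set \<Rightarrow> ('w \<Rightarrow> 'w set set) \<Rightarrow> (nat \<Rightarrow> 'w set) \<Rightarrow> bool" where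
  "nIML1_model W N V \<longleftrightarrow>
     W \<noteq> {} \<and>
     (\<forall>w\<in>W. N w \<subseteq> Pow W) \<and>
     (\<forall>w\<in>W.
        w \<in> capN N w \<and>
        capN N w \<in> N w \<and>
        (\<forall>u\<in>capN N w. capN N u \<subseteq> capN N w) \<and>
        (\<forall>X. capN N w \<subseteq> X \<and> X \<subseteq> cupN N w \<longrightarrow> X \<in> N w) \<and>
        (\<forall>u\<in>capN N w. cupN N u \<subseteq> cupN N w)) \<and>
     (\<forall>q. V q \<subseteq> W) \<and>
     (\<forall>q. \<forall>w\<in>W. w \<in> V q \<longrightarrow> capN N w \<subseteq> V q)"

definition T_condition :: "'w set \<Rightarrow> ('w \<Rightarrow> 'w set set) \<Rightarrow> bool" where
  "T_condition W N \<longleftrightarrow> (\<forall>w\<in>W. \<forall>v\<in>W. v \<in> cupN N w \<longrightarrow> capN N v \<subseteq> cupN N w)"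

fun forces :: "('w \<Rightarrow> 'w set set) \<Rightarrow> (nat \<Rightarrow> 'w set) \<Rightarrow> 'w \<Rightarrow> form \<Rightarrow> bool" where
  "forces N V w (Var q) = (w \<in> V q)"
| "forces N V w Bot = False"
| "forces N V w (Conj a b) = (forces N V w a \<and> forces N V w b)"
| "forces N V w (Disj a b) = (forces N V w a \<or> forces N V w b)"
| "forces N V w (Imp a b) = (\<forall>v\<in>capN N w. \<not> forces N V v a \<or> forces N V v b)"
| "forces N V w (SImp a b) = (\<forall>v\<in>cupN N w. \<not> forces N V v a \<or> forces N V v b)"
| "forces N V w (Delta a) = (\<forall>v\<in>cupN N w. forces N V v a)"

end

theory Submission
  imports Defs
begin

text \<open>Reflexivity (a) lets every world of the outer neighbourhood witness itself, and the
  T-condition keeps the inner neighbourhoods of those worlds inside the outer one, so the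
  worlds quantified over by \<open>\<Delta>(\<phi> \<rightarrow> \<psi>)\<close> are exactly those quantified over by \<open>\<phi> \<leadsto> \<psi>\<close>.\<close>

lemma nIML1_model_cupN_subset:
  assumes "nIML1_model W N V" and "w \<in> W"
  shows "cupN N w \<subseteq> W"
proof -
  have "\<forall>w\<in>W. N w \<subseteq> Pow W"
    using assms(1) unfolding nIML1_model_def by (elim conjE)
  then show ?thesis
    using assms(2) unfolding cupN_def by blast
qed

lemma nIML1_model_in_capN:
  assumes "nIML1_model W N V" and "w \<in> W"
  shows "w \<in> capN N w"
proof -
  have "\<forall>w\<in>W. w \<in> capN N w"
    using assms(1) unfolding nIML1_model_def by (metis (no_types, lifting))
  then show ?thesis
    using assms(2) by blast
qed

lemma cupN_eq_Union_capN:
  assumes refl: "\<And>v. v \<in> cupN N w \<Longrightarrow> v \<in> capN N v"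
    and T: "\<And>v. v \<in> cupN N w \<Longrightarrow> capN N v \<subseteq> cupN N w"
  shows "(\<Union>v\<in>cupN N w. capN N v) = cupN N w"
  using refl T by (intro equalityI UN_least) auto

lemma forces_SImp_iff_Delta_Imp:
  assumes "(\<Union>v\<in>cupN N w. capN N v) = cupN N w"
  shows "forces N V w (SImp \<phi> \<psi>) \<longleftrightarrow> forces N V w (Delta (Imp \<phi> \<psi>))"
proof -
  have "forces N V w (Delta (Imp \<phi> \<psi>)) \<longleftrightarrow>
        (\<forall>u\<in>(\<Union>v\<in>cupN N w. capN N v). \<not> forces N V u \<phi> \<or> forces N V u \<psi>)"
    by auto
  then show ?thesis
    using assms by simp
qed

theorem lemma6p1:
  fixes W :: "'w set" and N :: "'w \<Rightarrow> 'w set set" and V :: "nat \<Rightarrow> 'w set"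
  assumes "nIML1_model W N V"
    and "T_condition W N"
    and "w \<in> W"
  shows "forces N V w (SImp \<phi> \<psi>) \<longleftrightarrow> forces N V w (Delta (Imp \<phi> \<psi>))"
proof -
  have "v \<in> capN N v \<and> capN N v \<subseteq> cupN N w" if v: "v \<in> cupN N w" for v
  proof
    have "v \<in> W"
      using nIML1_model_cupN_subset[OF assms(1,3)] v by blast
    then show "v \<in> capN N v"
      using nIML1_model_in_capN[OF assms(1)] by blast
    show "capN N v \<subseteq> cupN N w"
      using assms(2,3) \<open>v \<in> W\<close> v unfolding T_condition_def by blast
  qed
  then have "(\<Union>v\<in>cupN N w. capN N v) = cupN N w"
    by (intro cupN_eq_Union_capN) blast+
  then show ?thesis
    by (rule forces_SImp_iff_Delta_Imp)
qed

end
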